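(* Let $k$ be a commutative ring, $P$ an invertible $k$-module, $Q=P^*$, and $A$ a $P$-Frobenius $k$-algebra. Suppose $(\phi,x_i,q_i,y_i)$ and $(\phi',x'_j,q'_j,y'_j)$ are two Frobenius systems for $A$ with Nakayama automorphisms $\nu,\nu'$. Then there is an invertible $d\in A$ such that $\phi'(a)=\phi(da)$ for all $a\in A$, \[ \sum_jx'_j\otimes q'_j\otimes y'_j=\sum_ix_i\otimes q_i\otimes d^{-1}y_i\quad\text{in }A\otimes_kQ\otimes_kA, \] and $\nu'(a)=d^{-1}\nu(a)d$ for all $a\in A$.
   Context: $P$ invertible means finitely generated projective of constant rank one. $A$ is $P$-Frobenius if it is finitely generated projective over $k$ and $A_A\cong\mathrm{Hom}_k(A,P)_A$, where $(\phi a)(x)=\phi(ax)$ and $(a\phi)(x)=\phi(xa)$. A Frobenius system $(\phi,x_i,q_i,y_i)$ consists of $\phi\in\mathrm{Hom}_k(A,P)$ (a Frobenius homomorphism, i.e. $a\mapsto\phi a$ is an isomorphism $A\to\mathrm{Hom}_k(A,P)$) and finitely many $x_i,y_i\in A$, $q_i\in Q$ with $\sum_ix_i\,q_i(\phi(y_ia))=a$ for all $a\in A$. Its Nakayama automorphism $\nu$ is the algebra automorphism with $\phi(xa)=\phi(\nu(a)x)$ for all $a,x\in A$. *)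

theory Defs
  imports Complex_Main "HOL-Library.Function_Algebras"
begin

definition k_algebra :: "('k::comm_ring_1 \<Rightarrow> 'a::ring_1 \<Rightarrow> 'a) \<Rightarrow> bool" where
  "k_algebra sA \<longleftrightarrow> module sA \<and>
     (\<forall>c x y. sA c (x * y) = sA c x * y \<and> sA c (x * y) = x * sA c y)"

text \<open>Finitely generated projective: a retract of a finite free module k^n
  (given by linear maps f_i : M \<rightarrow> k and elements e_i with m = sum f_i(m) e_i).\<close>
definition fg_projective :: "('k::comm_ring_1 \<Rightarrow> 'm::ab_group_add \<Rightarrow> 'm) \<Rightarrow> bool" where
  "fg_projective s \<longleftrightarrow> module s \<and>
     (\<exists>(n::nat) (e::nat \<Rightarrow> 'm) (f::nat \<Rightarrow> 'm \<Rightarrow> 'k).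
        (\<forall>i<n. module_hom s (*) (f i)) \<and> (\<forall>m. m = (\<Sum>i<n. s (f i m) (e i))))"

definition prime_ideal_k :: "'k::comm_ring_1 set \<Rightarrow> bool" where
  "prime_ideal_k I \<longleftrightarrow> 0 \<in> I \<and> (\<forall>a\<in>I. \<forall>b\<in>I. a + b \<in> I) \<and> (\<forall>a\<in>I. \<forall>r. r * a \<in> I)
     \<and> 1 \<notin> I \<and> (\<forall>a b. a * b \<in> I \<longrightarrow> a \<in> I \<or> b \<in> I)"

text \<open>The localization M_p is free of rank one over k_p (unfolded: some e/1 is a basis of M_p).\<close>
definition free_rank_one_at :: "('k::comm_ring_1 \<Rightarrow> 'm::ab_group_add \<Rightarrow> 'm) \<Rightarrow> 'k set \<Rightarrow> bool" where
  "free_rank_one_at s I \<longleftrightarrow> (\<exists>e.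
      (\<forall>m. \<exists>t. t \<notin> I \<and> (\<exists>c. s t m = s c e)) \<and>
      (\<forall>c. (\<exists>u. u \<notin> I \<and> s (u * c) e = 0) \<longrightarrow> (\<exists>u. u \<notin> I \<and> u * c = 0)))"

definition invertible_module :: "('k::comm_ring_1 \<Rightarrow> 'm::ab_group_add \<Rightarrow> 'm) \<Rightarrow> bool" where
  "invertible_module s \<longleftrightarrow> fg_projective s \<and> (\<forall>I. prime_ideal_k I \<longrightarrow> free_rank_one_at s I)"

definition dual :: "('k::comm_ring_1 \<Rightarrow> 'm::ab_group_add \<Rightarrow> 'm) \<Rightarrow> ('m \<Rightarrow> 'k) set" where
  "dual s = {q. module_hom s (*) q}"

definition dual_scale :: "'k::comm_ring_1 \<Rightarrow> ('m \<Rightarrow> 'k) \<Rightarrow> ('m \<Rightarrow> 'k)" where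
  "dual_scale c q = (\<lambda>p. c * q p)"

definition P_Frobenius :: "('k::comm_ring_1 \<Rightarrow> 'a::ring_1 \<Rightarrow> 'a) \<Rightarrow> ('k \<Rightarrow> 'p::ab_group_add \<Rightarrow> 'p) \<Rightarrow> bool" where
  "P_Frobenius sA sP \<longleftrightarrow> fg_projective sA \<and>
     (\<exists>F :: 'a \<Rightarrow> 'a \<Rightarrow> 'p.
        bij_betw F UNIV {f. module_hom sA sP f} \<and>
        (\<forall>a b x. F (a + b) x = F a x + F b x) \<and>
        (\<forall>a b x. F (a * b) x = F a (b * x)))"

definition frobenius_hom :: "('k::comm_ring_1 \<Rightarrow> 'a::ring_1 \<Rightarrow> 'a) \<Rightarrow> ('k \<Rightarrow> 'p::ab_group_add \<Rightarrow> 'p) \<Rightarrow> ('a \<Rightarrow> 'p) \<Rightarrow> bool" where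
  "frobenius_hom sA sP \<phi> \<longleftrightarrow> module_hom sA sP \<phi> \<and>
     bij_betw (\<lambda>a x. \<phi> (a * x)) UNIV {f. module_hom sA sP f}"

definition frobenius_system :: "('k::comm_ring_1 \<Rightarrow> 'a::ring_1 \<Rightarrow> 'a) \<Rightarrow> ('k \<Rightarrow> 'p::ab_group_add \<Rightarrow> 'p)
    \<Rightarrow> ('a \<Rightarrow> 'p) \<Rightarrow> nat \<Rightarrow> (nat \<Rightarrow> 'a) \<Rightarrow> (nat \<Rightarrow> 'p \<Rightarrow> 'k) \<Rightarrow> (nat \<Rightarrow> 'a) \<Rightarrow> bool" where
  "frobenius_system sA sP \<phi> n x q y \<longleftrightarrow> frobenius_hom sA sP \<phi> \<and>
     (\<forall>i<n. q i \<in> dual sP) \<and>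
     (\<forall>a. (\<Sum>i<n. sA (q i (\<phi> (y i * a))) (x i)) = a)"

definition nakayama_aut :: "('k::comm_ring_1 \<Rightarrow> 'a::ring_1 \<Rightarrow> 'a) \<Rightarrow> ('a \<Rightarrow> 'p) \<Rightarrow> ('a \<Rightarrow> 'a) \<Rightarrow> bool" where
  "nakayama_aut sA \<phi> \<nu> \<longleftrightarrow> bij \<nu> \<and>
     (\<forall>a b. \<nu> (a + b) = \<nu> a + \<nu> b) \<and> (\<forall>a b. \<nu> (a * b) = \<nu> a * \<nu> b) \<and> \<nu> 1 = 1 \<and>
     (\<forall>c a. \<nu> (sA c a) = sA c (\<nu> a)) \<and>
     (\<forall>a x. \<phi> (x * a) = \<phi> (\<nu> a * x))"

text \<open>Standard construction: the free k-module on M1 \<times> M2 \<times> M3 (finitely supported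
  functions to k) modulo the span of the trilinearity relations. The middle factor is given
  by a carrier set C2 (a submodule of the type 'q).\<close>

definition fscale :: "'k::comm_ring_1 \<Rightarrow> ('x \<Rightarrow> 'k) \<Rightarrow> ('x \<Rightarrow> 'k)" where
  "fscale c f = (\<lambda>t. c * f t)"

definition tdelta :: "'a \<Rightarrow> 'q \<Rightarrow> 'b \<Rightarrow> ('a \<times> 'q \<times> 'b \<Rightarrow> 'k::comm_ring_1)" where
  "tdelta a q b = (\<lambda>t. if t = (a, q, b) then 1 else 0)"

definition tensor3_rel ::
  "('k::comm_ring_1 \<Rightarrow> 'a::ab_group_add \<Rightarrow> 'a) \<Rightarrow> ('k \<Rightarrow> 'q::ab_group_add \<Rightarrow> 'q) \<Rightarrow> 'q set
   \<Rightarrow> ('k \<Rightarrow> 'b::ab_group_add \<Rightarrow> 'b) \<Rightarrow> ('a \<times> 'q \<times> 'b \<Rightarrow> 'k) set" where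
  "tensor3_rel s1 s2 C2 s3 =
     {tdelta (a + a') q b - tdelta a q b - tdelta a' q b | a a' q b. q \<in> C2} \<union>
     {tdelta (s1 c a) q b - fscale c (tdelta a q b) | c a q b. q \<in> C2} \<union>
     {tdelta a (q + q') b - tdelta a q b - tdelta a q' b | a q q' b. q \<in> C2 \<and> q' \<in> C2} \<union>
     {tdelta a (s2 c q) b - fscale c (tdelta a q b) | c a q b. q \<in> C2} \<union>
     {tdelta a q (b + b') - tdelta a q b - tdelta a q b' | a q b b'. q \<in> C2} \<union>
     {tdelta a q (s3 c b) - fscale c (tdelta a q b) | c a q b. q \<in> C2}"

definition tensor3_sum_eq ::
  "('k::comm_ring_1 \<Rightarrow> 'a::ab_group_add \<Rightarrow> 'a) \<Rightarrow> ('k \<Rightarrow> 'q::ab_group_add \<Rightarrow> 'q) \<Rightarrow> 'q set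
   \<Rightarrow> ('k \<Rightarrow> 'b::ab_group_add \<Rightarrow> 'b)
   \<Rightarrow> nat \<Rightarrow> (nat \<Rightarrow> 'a) \<Rightarrow> (nat \<Rightarrow> 'q) \<Rightarrow> (nat \<Rightarrow> 'b)
   \<Rightarrow> nat \<Rightarrow> (nat \<Rightarrow> 'a) \<Rightarrow> (nat \<Rightarrow> 'q) \<Rightarrow> (nat \<Rightarrow> 'b) \<Rightarrow> bool" where
  "tensor3_sum_eq s1 s2 C2 s3 m a q b n a' q' b' \<longleftrightarrow>
     (\<Sum>j<m. (tdelta (a j) (q j) (b j) :: 'a \<times> 'q \<times> 'b \<Rightarrow> 'k))
       - (\<Sum>i<n. tdelta (a' i) (q' i) (b' i))
     \<in> module.span (fscale :: 'k \<Rightarrow> ('a \<times> 'q \<times> 'b \<Rightarrow> 'k) \<Rightarrow> _) (tensor3_rel s1 s2 C2 s3)"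

end

theory Submission
  imports Defs
begin

(* Since a |-> phi(a * _) is a bijection onto Hom_k(A, P), there are d, e with
   phi' = phi(d * _) and phi = phi'(e * _), and cancelling gives d e = e d = 1; comparing
   phi(nu(a) d u) with phi'(u a) yields nu'(a) = e nu(a) d.  For the Casimir elements, expand
   each x'_j in the basis x_i and each e y_i in the basis y'_j: the middle factors that appear,
   q_i(p) q'_j and q'_j(p) q_i with p = phi(y_i x'_j), coincide because P is locally free of
   rank one, so that q(p1) p2 = q(p2) p1 for every functional q.  That identity is checked
   locally at every prime, using that a proper ideal lies in a prime ideal (Zorn). *)

definition ideal_k :: "'k::comm_ring_1 set \<Rightarrow> bool" where
  "ideal_k J \<longleftrightarrow> 0 \<in> J \<and> (\<forall>a\<in>J. \<forall>b\<in>J. a + b \<in> J) \<and> (\<forall>a\<in>J. \<forall>r. r * a \<in> J)"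

lemma ideal_k_Union_chain:
  assumes "C \<noteq> {}" and "subset.chain {I. ideal_k I} C"
  shows "ideal_k (\<Union>C)"
proof -
  have ideals: "\<And>I. I \<in> C \<Longrightarrow> ideal_k I"
    and comparable: "\<And>I J. I \<in> C \<Longrightarrow> J \<in> C \<Longrightarrow> I \<subseteq> J \<or> J \<subseteq> I"
    using assms(2) unfolding subset_chain_def by auto
  have common: "\<exists>I\<in>C. a \<in> I \<and> b \<in> I" if "a \<in> \<Union>C" "b \<in> \<Union>C" for a b
    using that comparable by blast
  show ?thesis
    unfolding ideal_k_def
  proof (intro conjI ballI allI)
    show "0 \<in> \<Union>C" using assms(1) ideals unfolding ideal_k_def by blast
    show "a + b \<in> \<Union>C" if "a \<in> \<Union>C" "b \<in> \<Union>C" for a b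
      using common[OF that] ideals unfolding ideal_k_def by blast
    show "r * a \<in> \<Union>C" if "a \<in> \<Union>C" for a r
      using that ideals unfolding ideal_k_def by blast
  qed
qed

lemma ideal_k_adjoin:
  assumes "ideal_k M"
  shows "ideal_k {m + r * a | m r. m \<in> M}"
  unfolding ideal_k_def
proof (intro conjI ballI allI)
  have "(0::'a) = 0 + 0 * a" by simp
  then show "0 \<in> {m + r * a | m r. m \<in> M}"
    using assms unfolding ideal_k_def by blast
next
  fix u v assume "u \<in> {m + r * a | m r. m \<in> M}" "v \<in> {m + r * a | m r. m \<in> M}"
  then obtain m1 r1 m2 r2 where "u = m1 + r1 * a" "v = m2 + r2 * a" "m1 \<in> M" "m2 \<in> M" by blast
  then have "u + v = (m1 + m2) + (r1 + r2) * a" "m1 + m2 \<in> M"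
    using assms unfolding ideal_k_def by (auto simp: algebra_simps)
  then show "u + v \<in> {m + r * a | m r. m \<in> M}" by blast
next
  fix u s assume "u \<in> {m + r * a | m r. m \<in> M}"
  then obtain m1 r1 where "u = m1 + r1 * a" "m1 \<in> M" by blast
  then have "s * u = s * m1 + (s * r1) * a" "s * m1 \<in> M"
    using assms unfolding ideal_k_def by (auto simp: algebra_simps)
  then show "s * u \<in> {m + r * a | m r. m \<in> M}" by blast
qed

lemma maximal_ideal_k_prime:
  assumes M: "ideal_k M" "1 \<notin> M"
    and maximal: "\<And>X. ideal_k X \<Longrightarrow> M \<subseteq> X \<Longrightarrow> 1 \<notin> X \<Longrightarrow> X = M"
  shows "prime_ideal_k M"
proof -
  have M0: "0 \<in> M" and M_add: "\<And>a b. a \<in> M \<Longrightarrow> b \<in> M \<Longrightarrow> a + b \<in> M"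
    and M_mult: "\<And>a r. a \<in> M \<Longrightarrow> r * a \<in> M"
    using M(1) unfolding ideal_k_def by auto
  have unit_combination: "\<exists>m r. m \<in> M \<and> 1 = m + r * a" if "a \<notin> M" for a
  proof -
    let ?X = "{m + r * a | m r. m \<in> M}"
    have "M \<subseteq> ?X"
    proof
      fix m assume "m \<in> M"
      moreover have "m = m + 0 * a" by simp
      ultimately show "m \<in> ?X" by blast
    qed
    moreover have "a \<in> ?X"
    proof -
      have "a = 0 + 1 * a" by simp
      with M0 show ?thesis by blast
    qed
    ultimately have "1 \<in> ?X" using maximal[OF ideal_k_adjoin[OF M(1)]] that by blast
    then show ?thesis by blast
  qed
  have "a \<in> M \<or> b \<in> M" if ab: "a * b \<in> M" for a b
  proof (rule ccontr)
    assume "\<not> (a \<in> M \<or> b \<in> M)"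
    then obtain m1 r m2 s where m: "m1 \<in> M" "m2 \<in> M" and "1 = m1 + r * a" "1 = m2 + s * b"
      using unit_combination by blast
    then have "(1::'a) = (m1 + r * a) * (m2 + s * b)" by simp
    also have "\<dots> = (m2 + s * b) * m1 + (r * a) * m2 + (r * s) * (a * b)"
      by (simp add: algebra_simps)
    also have "\<dots> \<in> M" using m ab by (meson M_add M_mult)
    finally show False using M(2) by simp
  qed
  then show ?thesis using M unfolding ideal_k_def prime_ideal_k_def by blast
qed

lemma proper_ideal_k_subset_prime:
  fixes J :: "'k::comm_ring_1 set"
  assumes "ideal_k J" "1 \<notin> J"
  obtains I where "prime_ideal_k I" "J \<subseteq> I"
proof -
  define proper where "proper = {I::'k set. ideal_k I \<and> J \<subseteq> I \<and> 1 \<notin> I}"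
  have "\<Union>C \<in> proper" if C: "C \<noteq> {}" "subset.chain proper C" for C
  proof -
    have "subset.chain {I. ideal_k I} C"
      using C(2) unfolding proper_def subset_chain_def by blast
    then have "ideal_k (\<Union>C)" using C(1) by (rule ideal_k_Union_chain[rotated])
    moreover have "J \<subseteq> \<Union>C" "1 \<notin> \<Union>C"
      using C unfolding proper_def subset_chain_def by blast+
    ultimately show ?thesis unfolding proper_def by blast
  qed
  moreover have "proper \<noteq> {}" using assms unfolding proper_def by blast
  ultimately obtain M where "M \<in> proper" and "\<forall>X\<in>proper. M \<subseteq> X \<longrightarrow> X = M"
    using subset_Zorn_nonempty[of proper] by blast
  then have "prime_ideal_k M" and "J \<subseteq> M"
    by (auto intro!: maximal_ideal_k_prime simp: proper_def)
  then show ?thesis by (rule that)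
qed

lemma locally_zero_imp_zero:
  fixes s :: "'k::comm_ring_1 \<Rightarrow> 'm::ab_group_add \<Rightarrow> 'm"
  assumes "module s"
    and local_zero: "\<And>I. prime_ideal_k I \<Longrightarrow> \<exists>t. t \<notin> I \<and> s t z = 0"
  shows "z = 0"
proof (rule ccontr)
  assume "z \<noteq> 0"
  interpret module s by fact
  define annihilator where "annihilator = {t. s t z = 0}"
  have "ideal_k annihilator"
    unfolding ideal_k_def annihilator_def by (simp add: scale_left_distrib flip: scale_scale)
  moreover have "1 \<notin> annihilator" using \<open>z \<noteq> 0\<close> unfolding annihilator_def by simp
  ultimately obtain I where "prime_ideal_k I" "annihilator \<subseteq> I"
    by (rule proper_ideal_k_subset_prime)
  with local_zero show False unfolding annihilator_def by blast
qed

lemma invertible_module_functional_swap: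
  fixes s :: "'k::comm_ring_1 \<Rightarrow> 'm::ab_group_add \<Rightarrow> 'm"
  assumes inv: "invertible_module s" and q: "module_hom s (*) q"
  shows "s (q p1) p2 = s (q p2) p1"
proof -
  have md: "module s" using inv unfolding invertible_module_def fg_projective_def by blast
  interpret module s by (rule md)
  have q_scale: "\<And>c p. q (s c p) = c * q p" using q by (rule module_hom.scale)
  let ?z = "s (q p1) p2 - s (q p2) p1"
  have "\<exists>t. t \<notin> I \<and> s t ?z = 0" if I: "prime_ideal_k I" for I
  proof -
    \<comment> \<open>Locally p1 and p2 are multiples of one generator e, where both sides become c1 c2 q(e) e.\<close>
    obtain e where e: "\<forall>m. \<exists>t. t \<notin> I \<and> (\<exists>c. s t m = s c e)"
      using inv I unfolding invertible_module_def free_rank_one_at_def by blast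
    obtain t1 c1 where t1: "t1 \<notin> I" "s t1 p1 = s c1 e" using e[rule_format, of p1] by blast
    obtain t2 c2 where t2: "t2 \<notin> I" "s t2 p2 = s c2 e" using e[rule_format, of p2] by blast
    have k_ac: "t1 * t2 * q p1 = t1 * q p1 * t2" "t1 * t2 * q p2 = t2 * q p2 * t1"
      "c1 * q e * c2 = c2 * q e * c1"
      by (simp_all add: mult_ac)
    have "s (t1 * t2) ?z = s (t1 * t2 * q p1) p2 - s (t1 * t2 * q p2) p1"
      by (simp only: scale_right_diff_distrib scale_scale)
    also have "\<dots> = s (q (s t1 p1)) (s t2 p2) - s (q (s t2 p2)) (s t1 p1)"
      by (simp only: q_scale scale_scale k_ac)
    also have "\<dots> = s (c1 * q e * c2) e - s (c2 * q e * c1) e"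
      by (simp only: t1(2) t2(2) q_scale scale_scale)
    also have "\<dots> = 0" by (simp only: k_ac diff_self)
    finally have "s (t1 * t2) ?z = 0" .
    moreover have "t1 * t2 \<notin> I" using I t1(1) t2(1) unfolding prime_ideal_k_def by blast
    ultimately show ?thesis by blast
  qed
  then have "?z = 0" by (rule locally_zero_imp_zero[OF md])
  then show ?thesis by simp
qed

lemma dual_scale_swap:
  assumes "invertible_module sP" and "q \<in> dual sP" "q' \<in> dual sP"
  shows "dual_scale (q p) q' = dual_scale (q' p) q"
proof (rule ext)
  fix r
  have q_scale: "\<And>c p. q (sP c p) = c * q p"
    using assms(2) unfolding dual_def by (simp add: module_hom.scale)
  have "q p * q' r = q (sP (q' r) p)" by (simp add: q_scale mult.commute)
  also have "\<dots> = q (sP (q' p) r)"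
    using invertible_module_functional_swap[OF assms(1)] assms(3) unfolding dual_def by simp
  also have "\<dots> = q' p * q r" by (simp add: q_scale)
  finally show "dual_scale (q p) q' r = dual_scale (q' p) q r" unfolding dual_scale_def .
qed

lemma frobenius_hom_cancel:
  assumes "frobenius_hom sA sP \<phi>" and "\<And>x. \<phi> (a * x) = \<phi> (b * x)"
  shows "a = b"
proof -
  have "inj (\<lambda>a x. \<phi> (a * x))"
    using assms(1) bij_betw_imp_inj_on unfolding frobenius_hom_def by blast
  moreover have "(\<lambda>x. \<phi> (a * x)) = (\<lambda>x. \<phi> (b * x))" using assms(2) by (rule ext)
  ultimately show ?thesis by (meson injD)
qed

lemma frobenius_hom_represents:
  assumes "frobenius_hom sA sP \<phi>" and "module_hom sA sP f"
  obtains d where "\<And>x. f x = \<phi> (d * x)"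
proof -
  have "f \<in> range (\<lambda>a x. \<phi> (a * x))"
    using assms bij_betw_imp_surj_on unfolding frobenius_hom_def by blast
  then show ?thesis using that by blast
qed

lemma frobenius_homs_unit_multiple:
  assumes \<phi>: "frobenius_hom sA sP \<phi>" and \<phi>': "frobenius_hom sA sP \<phi>'"
  obtains d e where "d * e = 1" "e * d = 1" "\<And>a. \<phi>' a = \<phi> (d * a)" "\<And>a. \<phi> a = \<phi>' (e * a)"
proof -
  obtain d where d: "\<And>a. \<phi>' a = \<phi> (d * a)"
    using frobenius_hom_represents[OF \<phi>, of \<phi>'] \<phi>' unfolding frobenius_hom_def by blast
  obtain e where e: "\<And>a. \<phi> a = \<phi>' (e * a)"
    using frobenius_hom_represents[OF \<phi>', of \<phi>] \<phi> unfolding frobenius_hom_def by blast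
  have "d * e = 1" by (rule frobenius_hom_cancel[OF \<phi>]) (simp add: mult.assoc flip: d e)
  moreover have "e * d = 1" by (rule frobenius_hom_cancel[OF \<phi>']) (simp add: mult.assoc flip: d e)
  ultimately show ?thesis using that d e by blast
qed

lemma nakayama_aut_change:
  assumes \<phi>: "frobenius_hom sA sP \<phi>"
    and \<nu>: "nakayama_aut sA \<phi> \<nu>" and \<nu>': "nakayama_aut sA \<phi>' \<nu>'"
    and d: "\<And>a. \<phi>' a = \<phi> (d * a)" and ed: "e * d = 1"
  shows "\<nu>' a = e * \<nu> a * d"
proof -
  have \<nu>_twist: "\<phi> (u * a) = \<phi> (\<nu> a * u)" for u
    using \<nu> unfolding nakayama_aut_def by blast
  have \<nu>'_twist: "\<phi>' (u * a) = \<phi>' (\<nu>' a * u)" for u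
    using \<nu>' unfolding nakayama_aut_def by blast
  have "\<nu> a * d = d * \<nu>' a"
  proof (rule frobenius_hom_cancel[OF \<phi>])
    fix u
    have "\<phi> (\<nu> a * d * u) = \<phi> (d * u * a)"
      using \<nu>_twist[of "d * u"] by (simp add: mult.assoc)
    also have "\<dots> = \<phi>' (u * a)" by (simp add: d mult.assoc)
    also have "\<dots> = \<phi> (d * \<nu>' a * u)"
      using \<nu>'_twist[of u] by (simp add: d mult.assoc)
    finally show "\<phi> (\<nu> a * d * u) = \<phi> (d * \<nu>' a * u)" .
  qed
  then have "e * \<nu> a * d = e * d * \<nu>' a" by (simp add: mult.assoc)
  then show ?thesis using ed by simp
qed

lemma frobenius_system_dual_expansion:
  fixes sA :: "'k::comm_ring_1 \<Rightarrow> 'a::ring_1 \<Rightarrow> 'a"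
    and sP :: "'k \<Rightarrow> 'p::ab_group_add \<Rightarrow> 'p"
  assumes kA: "k_algebra sA" and inv: "invertible_module sP"
    and fs: "frobenius_system sA sP \<phi> m x q y"
  shows "(\<Sum>j<m. sA (q j (\<phi> (c * x j))) (y j)) = c"
proof -
  have \<phi>: "frobenius_hom sA sP \<phi>" using fs unfolding frobenius_system_def by blast
  interpret \<phi>: module_hom sA sP \<phi> using \<phi> unfolding frobenius_hom_def by blast
  have q: "\<And>j. j < m \<Longrightarrow> module_hom sP (*) (q j)"
    using fs unfolding frobenius_system_def dual_def by blast
  have expand: "\<And>a. (\<Sum>j<m. sA (q j (\<phi> (y j * a))) (x j)) = a"
    using fs unfolding frobenius_system_def by blast
  have scale_left: "\<And>c u v. sA c (u * v) = sA c u * v"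
    and scale_right: "\<And>c u v. sA c (u * v) = u * sA c v"
    using kA unfolding k_algebra_def by blast+
  show ?thesis
  proof (rule frobenius_hom_cancel[OF \<phi>])
    fix a
    have "\<phi> ((\<Sum>j<m. sA (q j (\<phi> (c * x j))) (y j)) * a)
        = (\<Sum>j<m. sP (q j (\<phi> (c * x j))) (\<phi> (y j * a)))"
      by (simp add: sum_distrib_right \<phi>.sum \<phi>.scale flip: scale_left)
    also have "\<dots> = (\<Sum>j<m. sP (q j (\<phi> (y j * a))) (\<phi> (c * x j)))"
      by (rule sum.cong[OF refl]) (simp add: invertible_module_functional_swap[OF inv q])
    also have "\<dots> = \<phi> (c * (\<Sum>j<m. sA (q j (\<phi> (y j * a))) (x j)))"
      by (simp add: sum_distrib_left \<phi>.sum \<phi>.scale flip: scale_right)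
    also have "\<dots> = \<phi> (c * a)" by (simp add: expand)
    finally show "\<phi> ((\<Sum>j<m. sA (q j (\<phi> (c * x j))) (y j)) * a) = \<phi> (c * a)" .
  qed
qed

lemma fscale_module: "module (fscale :: 'k::comm_ring_1 \<Rightarrow> ('x \<Rightarrow> 'k) \<Rightarrow> ('x \<Rightarrow> 'k))"
  by unfold_locales (auto simp: fscale_def fun_eq_iff algebra_simps)

definition tensor3_cong ::
  "('k::comm_ring_1 \<Rightarrow> 'a::ab_group_add \<Rightarrow> 'a) \<Rightarrow> ('k \<Rightarrow> 'q::ab_group_add \<Rightarrow> 'q) \<Rightarrow> 'q set
   \<Rightarrow> ('k \<Rightarrow> 'b::ab_group_add \<Rightarrow> 'b) \<Rightarrow> ('a \<times> 'q \<times> 'b \<Rightarrow> 'k) \<Rightarrow> ('a \<times> 'q \<times> 'b \<Rightarrow> 'k) \<Rightarrow> bool" where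
  "tensor3_cong s1 s2 C2 s3 f g \<longleftrightarrow> f - g \<in> module.span fscale (tensor3_rel s1 s2 C2 s3)"

lemma tensor3_sum_eq_iff_cong:
  "tensor3_sum_eq s1 s2 C2 s3 m a q b n a' q' b' \<longleftrightarrow>
     tensor3_cong s1 s2 C2 s3 (\<Sum>j<m. tdelta (a j) (q j) (b j)) (\<Sum>i<n. tdelta (a' i) (q' i) (b' i))"
  unfolding tensor3_sum_eq_def tensor3_cong_def ..

context
  fixes s1 :: "'k::comm_ring_1 \<Rightarrow> 'a::ab_group_add \<Rightarrow> 'a"
    and s2 :: "'k \<Rightarrow> 'q::ab_group_add \<Rightarrow> 'q" and C2 :: "'q set"
    and s3 :: "'k \<Rightarrow> 'b::ab_group_add \<Rightarrow> 'b"
begin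

interpretation fm: module "fscale :: 'k \<Rightarrow> ('a \<times> 'q \<times> 'b \<Rightarrow> 'k) \<Rightarrow> _"
  by (rule fscale_module)

lemma tensor3_cong_sym: "tensor3_cong s1 s2 C2 s3 f g \<Longrightarrow> tensor3_cong s1 s2 C2 s3 g f"
  unfolding tensor3_cong_def using fm.span_neg by fastforce

lemma tensor3_cong_trans [trans]:
  "tensor3_cong s1 s2 C2 s3 f g \<Longrightarrow> tensor3_cong s1 s2 C2 s3 g h \<Longrightarrow> tensor3_cong s1 s2 C2 s3 f h"
  unfolding tensor3_cong_def using fm.span_add by fastforce

lemma tensor3_cong_add:
  "tensor3_cong s1 s2 C2 s3 f g \<Longrightarrow> tensor3_cong s1 s2 C2 s3 f' g'
   \<Longrightarrow> tensor3_cong s1 s2 C2 s3 (f + f') (g + g')"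
  unfolding tensor3_cong_def using fm.span_add by (fastforce simp: algebra_simps)

lemma tensor3_cong_sum:
  "(\<And>i. i \<in> A \<Longrightarrow> tensor3_cong s1 s2 C2 s3 (f i) (g i))
   \<Longrightarrow> tensor3_cong s1 s2 C2 s3 (sum f A) (sum g A)"
  unfolding tensor3_cong_def using fm.span_sum[of A "\<lambda>i. f i - g i"] by (simp add: sum_subtractf)

lemma tensor3_cong_add_first:
  "r \<in> C2 \<Longrightarrow> tensor3_cong s1 s2 C2 s3 (tdelta (a + a') r b) (tdelta a r b + tdelta a' r b)"
  unfolding tensor3_cong_def diff_diff_eq[symmetric]
  by (rule fm.span_base) (unfold tensor3_rel_def, fast)

lemma tensor3_cong_add_third:
  "r \<in> C2 \<Longrightarrow> tensor3_cong s1 s2 C2 s3 (tdelta a r (b + b')) (tdelta a r b + tdelta a r b')"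
  unfolding tensor3_cong_def diff_diff_eq[symmetric]
  by (rule fm.span_base) (unfold tensor3_rel_def, fast)

lemma tensor3_cong_scale_first:
  "r \<in> C2 \<Longrightarrow> tensor3_cong s1 s2 C2 s3 (tdelta (s1 c a) r b) (fscale c (tdelta a r b))"
  unfolding tensor3_cong_def by (rule fm.span_base) (unfold tensor3_rel_def, fast)

lemma tensor3_cong_scale_second:
  "r \<in> C2 \<Longrightarrow> tensor3_cong s1 s2 C2 s3 (tdelta a (s2 c r) b) (fscale c (tdelta a r b))"
  unfolding tensor3_cong_def by (rule fm.span_base) (unfold tensor3_rel_def, fast)

lemma tensor3_cong_scale_third:
  "r \<in> C2 \<Longrightarrow> tensor3_cong s1 s2 C2 s3 (tdelta a r (s3 c b)) (fscale c (tdelta a r b))"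
  unfolding tensor3_cong_def by (rule fm.span_base) (unfold tensor3_rel_def, fast)

lemma tensor3_cong_linear_first:
  assumes r: "r \<in> C2"
  shows "tensor3_cong s1 s2 C2 s3
           (tdelta (\<Sum>i<(n::nat). s1 (c i) (a i)) r b) (\<Sum>i<n. fscale (c i) (tdelta (a i) r b))"
proof (induction n)
  case 0
  have "tdelta 0 r b - (tdelta 0 r b + tdelta 0 r b) \<in> module.span fscale (tensor3_rel s1 s2 C2 s3)"
    using tensor3_cong_add_first[OF r, of 0 0] unfolding tensor3_cong_def by simp
  then show ?case unfolding tensor3_cong_def using fm.span_neg by fastforce
next
  case (Suc n)
  have "tensor3_cong s1 s2 C2 s3 (tdelta (\<Sum>i<Suc n. s1 (c i) (a i)) r b)
          (tdelta (\<Sum>i<n. s1 (c i) (a i)) r b + tdelta (s1 (c n) (a n)) r b)"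
    using tensor3_cong_add_first[OF r] by simp
  also have "tensor3_cong s1 s2 C2 s3 \<dots>
               ((\<Sum>i<n. fscale (c i) (tdelta (a i) r b)) + fscale (c n) (tdelta (a n) r b))"
    by (intro tensor3_cong_add Suc.IH tensor3_cong_scale_first r)
  finally show ?case by (simp only: sum.lessThan_Suc)
qed

lemma tensor3_cong_linear_third:
  assumes r: "r \<in> C2"
  shows "tensor3_cong s1 s2 C2 s3
           (tdelta a r (\<Sum>i<(n::nat). s3 (c i) (b i))) (\<Sum>i<n. fscale (c i) (tdelta a r (b i)))"
proof (induction n)
  case 0
  have "tdelta a r 0 - (tdelta a r 0 + tdelta a r 0) \<in> module.span fscale (tensor3_rel s1 s2 C2 s3)"
    using tensor3_cong_add_third[OF r, of a 0 0] unfolding tensor3_cong_def by simp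
  then show ?case unfolding tensor3_cong_def using fm.span_neg by fastforce
next
  case (Suc n)
  have "tensor3_cong s1 s2 C2 s3 (tdelta a r (\<Sum>i<Suc n. s3 (c i) (b i)))
          (tdelta a r (\<Sum>i<n. s3 (c i) (b i)) + tdelta a r (s3 (c n) (b n)))"
    using tensor3_cong_add_third[OF r] by simp
  also have "tensor3_cong s1 s2 C2 s3 \<dots>
               ((\<Sum>i<n. fscale (c i) (tdelta a r (b i))) + fscale (c n) (tdelta a r (b n)))"
    by (intro tensor3_cong_add Suc.IH tensor3_cong_scale_third r)
  finally show ?case by (simp only: sum.lessThan_Suc)
qed

lemma tensor3_cong_move_scalar:
  assumes "r \<in> C2" "r' \<in> C2" and "s2 c r = s2 c' r'"
  shows "tensor3_cong s1 s2 C2 s3 (fscale c (tdelta a r b)) (fscale c' (tdelta a r' b))"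
proof -
  have "tensor3_cong s1 s2 C2 s3 (fscale c (tdelta a r b)) (tdelta a (s2 c r) b)"
    by (rule tensor3_cong_sym, rule tensor3_cong_scale_second) fact
  also have "tensor3_cong s1 s2 C2 s3 \<dots> (fscale c' (tdelta a r' b))"
    unfolding assms(3) by (rule tensor3_cong_scale_second) fact
  finally show ?thesis .
qed

end

lemma frobenius_systems_tensor_change:
  fixes sA :: "'k::comm_ring_1 \<Rightarrow> 'a::ring_1 \<Rightarrow> 'a"
    and sP :: "'k \<Rightarrow> 'p::ab_group_add \<Rightarrow> 'p"
  assumes kA: "k_algebra sA" and inv: "invertible_module sP"
    and fs: "frobenius_system sA sP \<phi> n x q y"
    and fs': "frobenius_system sA sP \<phi>' m x' q' y'"
    and e: "\<And>a. \<phi> a = \<phi>' (e * a)"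
  shows "tensor3_sum_eq sA dual_scale (dual sP) sA m x' q' y' n x q (\<lambda>i. e * y i)"
proof -
  let ?cong = "tensor3_cong sA dual_scale (dual sP) sA"
  let ?T = "tdelta :: 'a \<Rightarrow> ('p \<Rightarrow> 'k) \<Rightarrow> 'a \<Rightarrow> ('a \<times> ('p \<Rightarrow> 'k) \<times> 'a \<Rightarrow> 'k)"
  have q: "\<And>i. i < n \<Longrightarrow> q i \<in> dual sP" and q': "\<And>j. j < m \<Longrightarrow> q' j \<in> dual sP"
    using fs fs' unfolding frobenius_system_def by auto
  have expand_x: "(\<Sum>i<n. sA (q i (\<phi> (y i * a))) (x i)) = a" for a
    using fs unfolding frobenius_system_def by blast
  define p where "p i j = \<phi> (y i * x' j)" for i j
  have expand_y': "(\<Sum>j<m. sA (q' j (p i j)) (y' j)) = e * y i" for i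
    using frobenius_system_dual_expansion[OF kA inv fs', of "e * y i"]
    by (simp add: p_def e mult.assoc)
  have "?cong (\<Sum>j<m. ?T (x' j) (q' j) (y' j))
              (\<Sum>j<m. \<Sum>i<n. fscale (q i (p i j)) (?T (x i) (q' j) (y' j)))"
  proof (rule tensor3_cong_sum)
    fix j assume "j \<in> {..<m}"
    then have "?cong (?T (\<Sum>i<n. sA (q i (p i j)) (x i)) (q' j) (y' j))
                     (\<Sum>i<n. fscale (q i (p i j)) (?T (x i) (q' j) (y' j)))"
      by (intro tensor3_cong_linear_first q') simp
    then show "?cong (?T (x' j) (q' j) (y' j)) (\<Sum>i<n. fscale (q i (p i j)) (?T (x i) (q' j) (y' j)))"
      by (simp only: p_def expand_x)
  qed
  also have "?cong \<dots> (\<Sum>j<m. \<Sum>i<n. fscale (q' j (p i j)) (?T (x i) (q i) (y' j)))"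
    by (intro tensor3_cong_sum tensor3_cong_move_scalar q q' dual_scale_swap[OF inv]) auto
  also have "\<dots> = (\<Sum>i<n. \<Sum>j<m. fscale (q' j (p i j)) (?T (x i) (q i) (y' j)))"
    by (rule sum.swap)
  also have "?cong \<dots> (\<Sum>i<n. ?T (x i) (q i) (e * y i))"
  proof (rule tensor3_cong_sum)
    fix i assume "i \<in> {..<n}"
    then have "?cong (?T (x i) (q i) (\<Sum>j<m. sA (q' j (p i j)) (y' j)))
                     (\<Sum>j<m. fscale (q' j (p i j)) (?T (x i) (q i) (y' j)))"
      by (intro tensor3_cong_linear_third q) simp
    then show "?cong (\<Sum>j<m. fscale (q' j (p i j)) (?T (x i) (q i) (y' j))) (?T (x i) (q i) (e * y i))"
      by (simp only: expand_y' tensor3_cong_sym)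
  qed
  finally show ?thesis unfolding tensor3_sum_eq_iff_cong .
qed

theorem theorem2p7:
  fixes sA :: "'k::comm_ring_1 \<Rightarrow> 'a::ring_1 \<Rightarrow> 'a"
    and sP :: "'k \<Rightarrow> 'p::ab_group_add \<Rightarrow> 'p"
    and \<phi> \<phi>' :: "'a \<Rightarrow> 'p"
    and n m :: nat
    and x y x' y' :: "nat \<Rightarrow> 'a"
    and q q' :: "nat \<Rightarrow> 'p \<Rightarrow> 'k"
    and \<nu> \<nu>' :: "'a \<Rightarrow> 'a"
  assumes "k_algebra sA"
    and "invertible_module sP"
    and "P_Frobenius sA sP"
    and "frobenius_system sA sP \<phi> n x q y"
    and "frobenius_system sA sP \<phi>' m x' q' y'"
    and "nakayama_aut sA \<phi> \<nu>"
    and "nakayama_aut sA \<phi>' \<nu>'"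
  shows "\<exists>d dinv. d * dinv = 1 \<and> dinv * d = 1 \<and>
           (\<forall>a. \<phi>' a = \<phi> (d * a)) \<and>
           tensor3_sum_eq sA dual_scale (dual sP) sA m x' q' y' n x q (\<lambda>i. dinv * y i) \<and>
           (\<forall>a. \<nu>' a = dinv * \<nu> a * d)"
proof -
  have \<phi>: "frobenius_hom sA sP \<phi>" and \<phi>': "frobenius_hom sA sP \<phi>'"
    using assms(4,5) unfolding frobenius_system_def by blast+
  obtain d e where "d * e = 1" "e * d = 1"
    and d: "\<And>a. \<phi>' a = \<phi> (d * a)" and e: "\<And>a. \<phi> a = \<phi>' (e * a)"
    using frobenius_homs_unit_multiple[OF \<phi> \<phi>'] by blast
  moreover have "tensor3_sum_eq sA dual_scale (dual sP) sA m x' q' y' n x q (\<lambda>i. e * y i)"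
    using frobenius_systems_tensor_change[OF assms(1,2,4,5)] e by blast
  moreover have "\<nu>' a = e * \<nu> a * d" for a
    using nakayama_aut_change[OF \<phi> assms(6,7)] d \<open>e * d = 1\<close> by blast
  ultimately show ?thesis by blast
qed

end
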